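(* Let $n\ge 2$ and let $R$ be the complex Leibniz algebra with basis $\{h,e_1,\dots,e_n\}$ and nonzero products $[e_i,e_1]=e_{i+1}$ ($1\le i\le n-1$), $[h,e_1]=-e_1$, $[e_i,h]=ie_i$ ($1\le i\le n$). Then $(d,D)$ is a biderivation of $R$ iff there exist $\alpha_1,\alpha_2,\beta_3,\dots,\beta_{n+1}\in\mathbb C$ such that, with the convention $e_{n+1}=0$, $$d(h)=-\alpha_1e_1,\quad d(e_i)=i\alpha_2e_i+\alpha_1e_{i+1}\ (1\le i\le n),$$ $$D(h)=-\alpha_1e_1+\sum_{i=2}^{n-1}i\beta_{i+1}e_i+\beta_{n+1}e_n,\quad D(e_1)=\alpha_2e_1-\alpha_1e_2+\sum_{i=3}^n\beta_ie_i,\quad D(e_i)=0\ (2\le i\le n).$$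
   Context: Leibniz algebras are right Leibniz over $\mathbb C$: $[x,[y,z]]=[[x,y],z]-[[x,z],y]$. Unlisted products are zero. A derivation is a linear $d$ with $d([x,y])=[d(x),y]+[x,d(y)]$; an anti-derivation is a linear $D$ with $D([x,y])=[D(x),y]-[D(y),x]$; a biderivation is a pair $(d,D)$ of a derivation and an anti-derivation with $[x,d(y)]=[x,D(y)]$ for all $x,y$. *)

theory Defs
  imports Complex_Main
begin

text \<open>The Leibniz algebra R (dimension n+1) is modelled on coordinate vectors
  x :: nat \<Rightarrow> complex supported on {0..n}; coordinate 0 is h, coordinate i
  (1 \<le> i \<le> n) is e_i.\<close>

definition carR :: "nat \<Rightarrow> (nat \<Rightarrow> complex) set" where
  "carR n = {x. \<forall>k>n. x k = 0}"

definition bvec :: "nat \<Rightarrow> nat \<Rightarrow> complex" where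
  "bvec i = (\<lambda>k. if k = i then 1 else 0)"

text \<open>h, and e_i with the convention e_i = 0 for i outside 1..n (so e_(n+1) = 0).\<close>
definition hh :: "nat \<Rightarrow> complex" where "hh = bvec 0"

definition ee :: "nat \<Rightarrow> nat \<Rightarrow> nat \<Rightarrow> complex" where
  "ee n i = (if 1 \<le> i \<and> i \<le> n then bvec i else (\<lambda>k. 0))"

definition vadd :: "(nat \<Rightarrow> complex) \<Rightarrow> (nat \<Rightarrow> complex) \<Rightarrow> nat \<Rightarrow> complex" where
  "vadd x y = (\<lambda>k. x k + y k)"

definition vsub :: "(nat \<Rightarrow> complex) \<Rightarrow> (nat \<Rightarrow> complex) \<Rightarrow> nat \<Rightarrow> complex" where
  "vsub x y = (\<lambda>k. x k - y k)"

definition smul :: "complex \<Rightarrow> (nat \<Rightarrow> complex) \<Rightarrow> nat \<Rightarrow> complex" where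
  "smul c x = (\<lambda>k. c * x k)"

text \<open>Structure constants: [b_i, b_j] = sum_k sc n i j k b_k, with
  [e_i,e_1] = e_(i+1) (1 \<le> i \<le> n-1), [h,e_1] = -e_1, [e_i,h] = i e_i (1 \<le> i \<le> n).\<close>
definition sc :: "nat \<Rightarrow> nat \<Rightarrow> nat \<Rightarrow> nat \<Rightarrow> complex" where
  "sc n i j k =
     (if 1 \<le> i \<and> i \<le> n - 1 \<and> j = 1 \<and> k = i + 1 then 1
      else if i = 0 \<and> j = 1 \<and> k = 1 then -1
      else if 1 \<le> i \<and> i \<le> n \<and> j = 0 \<and> k = i then of_nat i
      else 0)"

definition brk :: "nat \<Rightarrow> (nat \<Rightarrow> complex) \<Rightarrow> (nat \<Rightarrow> complex) \<Rightarrow> nat \<Rightarrow> complex" where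
  "brk n x y = (\<lambda>k. \<Sum>i\<le>n. \<Sum>j\<le>n. x i * y j * sc n i j k)"

definition linear_endo :: "nat \<Rightarrow> ((nat \<Rightarrow> complex) \<Rightarrow> (nat \<Rightarrow> complex)) \<Rightarrow> bool" where
  "linear_endo n f \<longleftrightarrow> (\<forall>x\<in>carR n. f x \<in> carR n)
     \<and> (\<forall>x\<in>carR n. \<forall>y\<in>carR n. f (vadd x y) = vadd (f x) (f y))
     \<and> (\<forall>c. \<forall>x\<in>carR n. f (smul c x) = smul c (f x))"

definition is_derivation :: "nat \<Rightarrow> ((nat \<Rightarrow> complex) \<Rightarrow> (nat \<Rightarrow> complex)) \<Rightarrow> bool" where
  "is_derivation n d \<longleftrightarrow> linear_endo n d \<and>
     (\<forall>x\<in>carR n. \<forall>y\<in>carR n. d (brk n x y) = vadd (brk n (d x) y) (brk n x (d y)))"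

definition is_antiderivation :: "nat \<Rightarrow> ((nat \<Rightarrow> complex) \<Rightarrow> (nat \<Rightarrow> complex)) \<Rightarrow> bool" where
  "is_antiderivation n D \<longleftrightarrow> linear_endo n D \<and>
     (\<forall>x\<in>carR n. \<forall>y\<in>carR n. D (brk n x y) = vsub (brk n (D x) y) (brk n (D y) x))"

definition is_biderivation :: "nat \<Rightarrow> ((nat \<Rightarrow> complex) \<Rightarrow> (nat \<Rightarrow> complex))
    \<Rightarrow> ((nat \<Rightarrow> complex) \<Rightarrow> (nat \<Rightarrow> complex)) \<Rightarrow> bool" where
  "is_biderivation n d D \<longleftrightarrow> is_derivation n d \<and> is_antiderivation n D \<and>
     (\<forall>x\<in>carR n. \<forall>y\<in>carR n. brk n x (d y) = brk n x (D y))"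

end

theory Submission
  imports Defs
begin

text \<open>
  The bracket of R only sees the h- and e_1-coordinates of its right argument:
  [x, y] = y_1 R_{e_1} x + y_0 R_h x, and the two right multiplications satisfy
  [R_h, R_{e_1}] = R_{e_1}. This makes R right Leibniz, so every right multiplication
  R_z is a derivation. Conversely the Leibniz rule on the pairs (h, h), (e_1, h) and
  (e_i, e_1) forces a derivation to agree with R_z for z = alpha_2 h + alpha_1 e_1.
  For an anti-derivation the pairs (e_i, e_1) give D(e_i) = 0 for i \<ge> 2, and the pair
  (h, e_1) gives R_h Q - Q = R_{e_1} P for P = D(h), Q = D(e_1); conversely these
  conditions suffice. The compatibility [x, d y] = [x, D y] then just fixes the
  h- and e_1-coordinates of P and Q, and the remaining coordinates are the beta's.
\<close>

section \<open>Right multiplications and the bracket\<close>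

definition rmul_e1 :: "nat \<Rightarrow> (nat \<Rightarrow> complex) \<Rightarrow> nat \<Rightarrow> complex" where
  "rmul_e1 n x = (\<lambda>k. if k = 1 then - x 0 else if 2 \<le> k \<and> k \<le> n then x (k - 1) else 0)"

definition rmul_h :: "nat \<Rightarrow> (nat \<Rightarrow> complex) \<Rightarrow> nat \<Rightarrow> complex" where
  "rmul_h n x = (\<lambda>k. if 1 \<le> k \<and> k \<le> n then of_nat k * x k else 0)"

lemma hh_apply: "hh k = (if k = 0 then 1 else 0)"
  by (simp add: hh_def bvec_def)

lemma ee_apply: "ee n i k = (if k = i \<and> 1 \<le> i \<and> i \<le> n then 1 else 0)"
  by (simp add: ee_def bvec_def)

lemma hh_in_carR: "hh \<in> carR n"
  by (simp add: carR_def hh_apply)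

lemma ee_in_carR: "ee n i \<in> carR n"
  by (simp add: carR_def ee_apply)

lemma sum_ee_apply:
  "(\<Sum>i\<in>S. f i * ee n i k) = (if k \<in> S \<and> 1 \<le> k \<and> k \<le> n then f k else 0)"
  if "finite S"
proof -
  have "(\<Sum>i\<in>S. f i * ee n i k) = (\<Sum>i\<in>S. if i = k then (if 1 \<le> k \<and> k \<le> n then f k else 0) else 0)"
    by (rule sum.cong) (auto simp: ee_apply)
  with that show ?thesis by (simp add: sum.delta)
qed

lemma rmul_e1_lincomb:
  "rmul_e1 n (\<lambda>k. a * x k + b * y k) = (\<lambda>k. a * rmul_e1 n x k + b * rmul_e1 n y k)"
  by (rule ext) (simp add: rmul_e1_def algebra_simps)

lemma rmul_h_lincomb:
  "rmul_h n (\<lambda>k. a * x k + b * y k) = (\<lambda>k. a * rmul_h n x k + b * rmul_h n y k)"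
  by (auto simp: rmul_h_def algebra_simps)

lemma rmul_h_rmul_e1_commute:
  "1 \<le> n \<Longrightarrow> rmul_h n (rmul_e1 n x) k = rmul_e1 n (rmul_h n x) k + rmul_e1 n x k"
  by (auto simp: rmul_e1_def rmul_h_def of_nat_diff algebra_simps)

lemma rmul_apply_0_1:
  assumes "1 \<le> n"
  shows "rmul_e1 n x 0 = 0" "rmul_e1 n x 1 = - x 0" "rmul_h n x 0 = 0" "rmul_h n x 1 = x 1"
  using assms by (simp_all add: rmul_e1_def rmul_h_def)

lemma rmul_e1_hh: "1 \<le> n \<Longrightarrow> rmul_e1 n hh = smul (- 1) (ee n 1)"
  by (auto simp: rmul_e1_def smul_def hh_apply ee_apply)

lemma rmul_h_hh: "rmul_h n hh = (\<lambda>k. 0)"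
  by (auto simp: rmul_h_def hh_apply)

lemma rmul_e1_ee: "1 \<le> i \<Longrightarrow> rmul_e1 n (ee n i) = ee n (Suc i)"
  by (rule ext) (auto simp: rmul_e1_def ee_apply)

lemma rmul_h_ee: "rmul_h n (ee n i) = smul (of_nat i) (ee n i)"
  by (auto simp: rmul_h_def smul_def ee_apply)

lemma brk_eq:
  assumes "1 \<le> n"
  shows "brk n x y = (\<lambda>k. y 1 * rmul_e1 n x k + y 0 * rmul_h n x k)"
proof
  fix k
  have inner: "(\<Sum>j\<le>n. x i * y j * sc n i j k) = x i * y 0 * sc n i 0 k + x i * y 1 * sc n i 1 k"
    for i
  proof -
    have "{..n} = insert 0 (insert 1 {2..n})" using assms by auto
    moreover have "(\<Sum>j\<in>{2..n}. x i * y j * sc n i j k) = 0"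
      by (rule sum.neutral) (auto simp: sc_def)
    ultimately show ?thesis by simp
  qed
  have "brk n x y k = (\<Sum>i\<le>n. x i * y 0 * sc n i 0 k) + (\<Sum>i\<le>n. x i * y 1 * sc n i 1 k)"
    by (simp add: brk_def inner sum.distrib)
  also have "(\<Sum>i\<le>n. x i * y 0 * sc n i 0 k) = y 0 * rmul_h n x k"
  proof -
    have "(\<Sum>i\<le>n. x i * y 0 * sc n i 0 k)
        = (\<Sum>i\<le>n. if i = k then (if 1 \<le> k \<and> k \<le> n then y 0 * (of_nat k * x k) else 0) else 0)"
      by (rule sum.cong) (auto simp: sc_def)
    then show ?thesis by (cases "k \<le> n") (auto simp: rmul_h_def)
  qed
  also have "(\<Sum>i\<le>n. x i * y 1 * sc n i 1 k) = y 1 * rmul_e1 n x k"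
  proof -
    have "(\<Sum>i\<le>n. x i * y 1 * sc n i 1 k)
        = (\<Sum>i\<le>n. (if i = 0 then (if k = 1 then - y 1 * x 0 else 0) else 0)
            + (if i = k - 1 then (if 2 \<le> k \<and> k \<le> n then y 1 * x (k - 1) else 0) else 0))"
      by (rule sum.cong) (auto simp: sc_def)
    then show ?thesis by (cases "k \<le> n") (auto simp: rmul_e1_def sum.distrib)
  qed
  finally show "brk n x y k = y 1 * rmul_e1 n x k + y 0 * rmul_h n x k" by simp
qed

lemma brk_in_carR: "1 \<le> n \<Longrightarrow> brk n x y \<in> carR n"
  by (simp add: brk_eq carR_def rmul_e1_def rmul_h_def)

lemma brk_apply_0_1:
  "1 \<le> n \<Longrightarrow> brk n x y 0 = 0"
  "1 \<le> n \<Longrightarrow> brk n x y 1 = x 1 * y 0 - x 0 * y 1"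
  by (simp_all add: brk_eq rmul_apply_0_1 del: One_nat_def)

lemma brk_hh: "1 \<le> n \<Longrightarrow> brk n x hh = rmul_h n x"
  by (simp add: brk_eq hh_apply)

lemma brk_ee:
  "1 \<le> n \<Longrightarrow> 1 \<le> i \<Longrightarrow> brk n x (ee n i) = (if i = 1 then rmul_e1 n x else (\<lambda>k. 0))"
  by (auto simp: brk_eq ee_apply)

lemma brk_right_leibniz:
  assumes "1 \<le> n"
  shows "brk n x (brk n y z) = vsub (brk n (brk n x y) z) (brk n (brk n x z) y)"
proof
  fix k
  have "rmul_h n (rmul_e1 n x) k = rmul_e1 n (rmul_h n x) k + rmul_e1 n x k"
    using assms by (rule rmul_h_rmul_e1_commute)
  then show "brk n x (brk n y z) k = vsub (brk n (brk n x y) z) (brk n (brk n x z) y) k"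
    using assms
    by (simp add: brk_eq[OF assms] rmul_apply_0_1 vsub_def rmul_e1_lincomb rmul_h_lincomb
        algebra_simps del: One_nat_def)
qed

lemma linear_endo_smul: "linear_endo n f \<Longrightarrow> x \<in> carR n \<Longrightarrow> f (smul c x) = smul c (f x)"
  by (simp add: linear_endo_def)

lemma linear_endo_zero: "linear_endo n f \<Longrightarrow> f (\<lambda>k. 0) = (\<lambda>k. 0)"
  using linear_endo_smul[of n f "\<lambda>k. 0" 0] by (simp add: carR_def smul_def)

lemma linear_endo_expand:
  assumes f: "linear_endo n f" and x: "x \<in> carR n"
  shows "f x = (\<lambda>k. \<Sum>i\<le>n. x i * f (bvec i) k)"
proof -
  define trunc where "trunc m = (\<lambda>k. if k \<le> m then x k else 0)" for m
  have bvec: "bvec i \<in> carR n" if "i \<le> n" for i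
    using that by (auto simp: carR_def bvec_def)
  have "f (trunc m) = (\<lambda>k. \<Sum>i\<le>m. x i * f (bvec i) k)" if "m \<le> n" for m
    using that
  proof (induction m)
    case 0
    have "trunc 0 = smul (x 0) (bvec 0)" by (auto simp: trunc_def smul_def bvec_def)
    then show ?case using linear_endo_smul[OF f bvec] by (simp add: smul_def)
  next
    case (Suc m)
    have "trunc (Suc m) = vadd (trunc m) (smul (x (Suc m)) (bvec (Suc m)))"
      by (auto simp: trunc_def smul_def bvec_def vadd_def le_Suc_eq)
    moreover have "trunc m \<in> carR n" "smul (x (Suc m)) (bvec (Suc m)) \<in> carR n"
      using Suc.prems by (auto simp: carR_def trunc_def smul_def bvec_def)
    ultimately have "f (trunc (Suc m)) = vadd (f (trunc m)) (smul (x (Suc m)) (f (bvec (Suc m))))"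
      using f linear_endo_smul[OF f bvec[OF Suc.prems]] unfolding linear_endo_def by simp
    then show ?case using Suc by (simp add: vadd_def smul_def)
  qed
  moreover have "trunc n = x" using x by (auto simp: trunc_def carR_def)
  ultimately show ?thesis by auto
qed

lemma linear_endo_eqI:
  assumes f: "linear_endo n f" and g: "linear_endo n g" and "f hh = g hh"
    and "\<forall>i\<in>{1..n}. f (ee n i) = g (ee n i)" and x: "x \<in> carR n"
  shows "f x = g x"
proof -
  have "f (bvec i) = g (bvec i)" if "i \<le> n" for i
    using assms(3,4) that by (cases "i = 0") (auto simp: hh_def ee_def)
  then show ?thesis
    using linear_endo_expand[OF f x] linear_endo_expand[OF g x] by simp
qed

lemma linear_endo_right_mult: "1 \<le> n \<Longrightarrow> linear_endo n (\<lambda>x. brk n x z)"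
  unfolding linear_endo_def using brk_in_carR
  by (auto simp: brk_eq vadd_def smul_def rmul_e1_def rmul_h_def algebra_simps)

lemma linear_endo_lincomb_0_1:
  "P \<in> carR n \<Longrightarrow> Q \<in> carR n \<Longrightarrow> linear_endo n (\<lambda>x. vadd (smul (x 0) P) (smul (x 1) Q))"
  unfolding linear_endo_def carR_def vadd_def smul_def by (auto simp: algebra_simps)

section \<open>Derivations\<close>

lemma derivation_right_mult:
  assumes "1 \<le> n"
  shows "is_derivation n (\<lambda>x. brk n x z)"
proof -
  have "brk n (brk n x y) z = vadd (brk n (brk n x z) y) (brk n x (brk n y z))" for x y
    using brk_right_leibniz[OF assms, of x y z] by (auto simp: vadd_def vsub_def)
  then show ?thesis
    unfolding is_derivation_def using linear_endo_right_mult[OF assms] by blast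
qed

lemma right_mult_hh: "1 \<le> n \<Longrightarrow> brk n hh z = smul (- z 1) (ee n 1)"
  by (auto simp: brk_eq rmul_e1_hh rmul_h_hh smul_def)

lemma right_mult_ee:
  "1 \<le> n \<Longrightarrow> 1 \<le> i \<Longrightarrow>
    brk n (ee n i) z = vadd (smul (of_nat i * z 0) (ee n i)) (smul (z 1) (ee n (i + 1)))"
  by (auto simp: brk_eq rmul_e1_ee rmul_h_ee smul_def vadd_def)

lemma derivation_hh_ee1:
  assumes d: "is_derivation n d" and n: "2 \<le> n"
  shows "d hh = smul (d hh 1) (ee n 1)"
    and "d (ee n 1) = vadd (smul (d (ee n 1) 1) (ee n 1)) (smul (- d hh 1) (ee n 2))"
proof -
  have lin: "linear_endo n d"
    and leibniz: "\<And>x y. x \<in> carR n \<Longrightarrow> y \<in> carR n \<Longrightarrow>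
      d (brk n x y) = vadd (brk n (d x) y) (brk n x (d y))"
    using d by (auto simp: is_derivation_def)
  have n1: "1 \<le> n" using n by simp
  have car: "d hh \<in> carR n" "d (ee n 1) \<in> carR n"
    using lin hh_in_carR ee_in_carR by (auto simp: linear_endo_def)
  have "(\<lambda>k. 0) = vadd (rmul_h n (d hh)) (brk n hh (d hh))"
    using leibniz[OF hh_in_carR hh_in_carR] linear_endo_zero[OF lin]
    by (simp add: brk_hh[OF n1] rmul_h_hh)
  then have hh_hh: "0 = rmul_h n (d hh) k + (d hh 1 * rmul_e1 n hh k + d hh 0 * rmul_h n hh k)"
    for k
    using n1 by (simp add: fun_eq_iff vadd_def brk_eq del: One_nat_def)
  have "brk n (ee n 1) hh = ee n 1"
    using n1 by (simp add: brk_hh rmul_h_ee smul_def)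
  then have "d (ee n 1) = vadd (rmul_h n (d (ee n 1))) (brk n (ee n 1) (d hh))"
    using leibniz[OF ee_in_carR hh_in_carR, of 1] by (simp only: brk_hh[OF n1])
  then have e1_hh: "d (ee n 1) k = rmul_h n (d (ee n 1)) k + (d hh 1 * ee n 2 k + d hh 0 * ee n 1 k)"
    for k
    using n1 by (simp add: fun_eq_iff vadd_def brk_eq rmul_e1_ee rmul_h_ee smul_def del: One_nat_def)
  show hh: "d hh = smul (d hh 1) (ee n 1)"
  proof
    fix k
    have "d hh 0 = 0" using e1_hh[of 1] n by (simp add: rmul_h_def ee_apply)
    moreover have "d hh k = 0" if "2 \<le> k" "k \<le> n"
      using hh_hh[of k] that by (simp add: rmul_h_def rmul_e1_def hh_apply)
    moreover consider "k = 0" | "k = 1" | "2 \<le> k \<and> k \<le> n" | "n < k" by linarith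
    ultimately show "d hh k = smul (d hh 1) (ee n 1) k"
      using car n by cases (auto simp: carR_def smul_def ee_apply)
  qed
  show "d (ee n 1) = vadd (smul (d (ee n 1) 1) (ee n 1)) (smul (- d hh 1) (ee n 2))"
  proof
    fix k
    have "d (ee n 1) k = 0" if "k \<noteq> 1" "k \<noteq> 2" "k \<le> n"
      using e1_hh[of k] that by (auto simp: rmul_h_def ee_apply split: if_splits)
    moreover have "d (ee n 1) 2 = - d hh 1"
      using e1_hh[of 2] n by (simp add: rmul_h_def ee_apply eq_neg_iff_add_eq_0)
    ultimately show "d (ee n 1) k = vadd (smul (d (ee n 1) 1) (ee n 1)) (smul (- d hh 1) (ee n 2)) k"
      using car n by (cases "k \<le> n") (auto simp: carR_def smul_def vadd_def ee_apply)
  qed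
qed

lemma derivation_ee_Suc:
  assumes d: "is_derivation n d" and n: "1 \<le> n" and i: "1 \<le> i"
  shows "d (ee n (Suc i)) = vadd (rmul_e1 n (d (ee n i))) (brk n (ee n i) (d (ee n 1)))"
proof -
  have "brk n (ee n i) (ee n 1) = ee n (Suc i)"
    using n i by (simp add: brk_ee rmul_e1_ee)
  moreover have "d (brk n (ee n i) (ee n 1))
      = vadd (brk n (d (ee n i)) (ee n 1)) (brk n (ee n i) (d (ee n 1)))"
    using d ee_in_carR by (simp add: is_derivation_def)
  ultimately show ?thesis
    using n by (simp add: brk_ee)
qed

lemma derivation_eq_right_mult:
  assumes d: "is_derivation n d" and n: "2 \<le> n"
  obtains z where "\<forall>x\<in>carR n. d x = brk n x z"
proof -
  have n1: "1 \<le> n" using n by simp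
  define z :: "nat \<Rightarrow> complex" where "z = (\<lambda>k. if k = 0 then d (ee n 1) 1 else - d hh 1)"
  have r: "is_derivation n (\<lambda>x. brk n x z)"
    using derivation_right_mult[OF n1] .
  have "d hh = smul (d hh 1) (ee n 1)"
    by (rule derivation_hh_ee1(1)[OF d n])
  also have "\<dots> = brk n hh z"
    by (simp add: right_mult_hh[OF n1] z_def)
  finally have hh: "d hh = brk n hh z" .
  have "d (ee n 1) = vadd (smul (d (ee n 1) 1) (ee n 1)) (smul (- d hh 1) (ee n 2))"
    by (rule derivation_hh_ee1(2)[OF d n])
  also have "\<dots> = brk n (ee n 1) z"
    by (simp add: right_mult_ee[OF n1] z_def numeral_2_eq_2)
  finally have e1: "d (ee n 1) = brk n (ee n 1) z" .
  have "d (ee n i) = brk n (ee n i) z" if "1 \<le> i" for i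
    using that
  proof (induction i rule: nat_induct_at_least)
    case base
    show ?case using e1 .
  next
    case (Suc i)
    have "d (ee n (Suc i)) = vadd (rmul_e1 n (d (ee n i))) (brk n (ee n i) (d (ee n 1)))"
      using derivation_ee_Suc[OF d n1 Suc.hyps] .
    also have "\<dots> = vadd (rmul_e1 n (brk n (ee n i) z)) (brk n (ee n i) (brk n (ee n 1) z))"
      using Suc.IH e1 by simp
    also have "\<dots> = brk n (ee n (Suc i)) z"
      using derivation_ee_Suc[OF r n1 Suc.hyps] by simp
    finally show ?case .
  qed
  then have "\<forall>x\<in>carR n. d x = brk n x z"
    using linear_endo_eqI[of n d "\<lambda>x. brk n x z"] d r hh by (simp add: is_derivation_def)
  then show thesis ..
qed

theorem derivation_iff_right_mult:
  assumes n: "2 \<le> n" and lin: "linear_endo n d"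
  shows "is_derivation n d \<longleftrightarrow> (\<exists>z. \<forall>x\<in>carR n. d x = brk n x z)"
proof
  assume "is_derivation n d"
  then obtain z where "\<forall>x\<in>carR n. d x = brk n x z"
    using derivation_eq_right_mult n by blast
  then show "\<exists>z. \<forall>x\<in>carR n. d x = brk n x z" by blast
next
  assume "\<exists>z. \<forall>x\<in>carR n. d x = brk n x z"
  then obtain z where z: "\<forall>x\<in>carR n. d x = brk n x z" ..
  have "is_derivation n (\<lambda>x. brk n x z)"
    using n by (simp add: derivation_right_mult)
  then show "is_derivation n d"
    using lin z brk_in_carR n by (simp add: is_derivation_def)
qed

lemma eq_right_mult_iff_basis:
  assumes n: "1 \<le> n" and lin: "linear_endo n d"
  shows "(\<forall>x\<in>carR n. d x = brk n x z) \<longleftrightarrow>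
    d hh = smul (- z 1) (ee n 1) \<and>
    (\<forall>i\<in>{1..n}. d (ee n i) = vadd (smul (of_nat i * z 0) (ee n i)) (smul (z 1) (ee n (i + 1))))"
proof
  assume "\<forall>x\<in>carR n. d x = brk n x z"
  then show "d hh = smul (- z 1) (ee n 1) \<and>
      (\<forall>i\<in>{1..n}. d (ee n i) = vadd (smul (of_nat i * z 0) (ee n i)) (smul (z 1) (ee n (i + 1))))"
    using hh_in_carR ee_in_carR by (simp add: right_mult_hh[OF n] right_mult_ee[OF n])
next
  assume "d hh = smul (- z 1) (ee n 1) \<and>
      (\<forall>i\<in>{1..n}. d (ee n i) = vadd (smul (of_nat i * z 0) (ee n i)) (smul (z 1) (ee n (i + 1))))"
  then show "\<forall>x\<in>carR n. d x = brk n x z"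
    using linear_endo_eqI[OF lin linear_endo_right_mult[OF n]]
    by (simp add: right_mult_hh[OF n] right_mult_ee[OF n])
qed

section \<open>Anti-derivations\<close>

lemma antiderivation_hh_ee1:
  assumes D: "is_antiderivation n D" and n: "1 \<le> n"
  shows "vsub (rmul_h n (D (ee n 1))) (D (ee n 1)) = rmul_e1 n (D hh)"
proof -
  have "D (brk n hh (ee n 1)) = vsub (brk n (D hh) (ee n 1)) (brk n (D (ee n 1)) hh)"
    using D hh_in_carR ee_in_carR by (simp add: is_antiderivation_def)
  moreover have "D (smul (- 1) (ee n 1)) = smul (- 1) (D (ee n 1))"
    using D ee_in_carR linear_endo_smul unfolding is_antiderivation_def by blast
  ultimately have "smul (- 1) (D (ee n 1)) = vsub (rmul_e1 n (D hh)) (rmul_h n (D (ee n 1)))"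
    using n by (simp add: brk_ee brk_hh rmul_e1_hh)
  then show ?thesis
    by (simp add: fun_eq_iff vsub_def smul_def algebra_simps)
qed

lemma antiderivation_ee_Suc:
  assumes D: "is_antiderivation n D" and n: "1 \<le> n" and i: "1 \<le> i"
  shows "D (ee n (Suc i)) = vsub (rmul_e1 n (D (ee n i))) (brk n (D (ee n 1)) (ee n i))"
proof -
  have "brk n (ee n i) (ee n 1) = ee n (Suc i)"
    using n i by (simp add: brk_ee rmul_e1_ee)
  moreover have "D (brk n (ee n i) (ee n 1))
      = vsub (brk n (D (ee n i)) (ee n 1)) (brk n (D (ee n 1)) (ee n i))"
    using D ee_in_carR by (simp add: is_antiderivation_def)
  ultimately show ?thesis
    using n by (simp add: brk_ee)
qed

lemma antiderivation_ee_vanishes: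
  assumes D: "is_antiderivation n D" and n: "1 \<le> n" and i: "2 \<le> i"
  shows "D (ee n i) = (\<lambda>k. 0)"
  using i
proof (induction i rule: nat_induct_at_least)
  case base
  show ?case
    using antiderivation_ee_Suc[OF D n, of 1] n by (simp add: brk_ee vsub_def numeral_2_eq_2)
next
  case (Suc i)
  have "rmul_e1 n (\<lambda>k. 0) = (\<lambda>k. 0)"
    by (rule ext) (simp add: rmul_e1_def)
  with Suc show ?case
    using antiderivation_ee_Suc[OF D n, of i] n by (simp add: brk_ee vsub_def)
qed

lemma antiderivation_lincomb_0_1:
  assumes n: "1 \<le> n" and PQ: "P \<in> carR n" "Q \<in> carR n"
    and cond: "vsub (rmul_h n Q) Q = rmul_e1 n P"
  shows "is_antiderivation n (\<lambda>x. vadd (smul (x 0) P) (smul (x 1) Q))"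
proof -
  have "vadd (smul (brk n x y 0) P) (smul (brk n x y 1) Q) k
      = vsub (brk n (vadd (smul (x 0) P) (smul (x 1) Q)) y) (brk n (vadd (smul (y 0) P) (smul (y 1) Q)) x) k"
    for x y k
  proof -
    have brk_lincomb: "brk n (vadd (smul a P) (smul b Q)) w k
        = w 1 * (a * rmul_e1 n P k + b * rmul_e1 n Q k) + w 0 * (a * rmul_h n P k + b * rmul_h n Q k)"
      for a b w
      by (simp add: brk_eq n vadd_def smul_def rmul_e1_lincomb rmul_h_lincomb del: One_nat_def)
    have "rmul_h n Q k = Q k + rmul_e1 n P k"
      using cond by (simp add: fun_eq_iff vsub_def algebra_simps)
    then show ?thesis
      unfolding vsub_def brk_lincomb unfolding vadd_def smul_def brk_apply_0_1[OF n]
      by (simp add: algebra_simps)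
  qed
  then show ?thesis
    unfolding is_antiderivation_def using linear_endo_lincomb_0_1[OF PQ] by (simp add: fun_eq_iff)
qed

lemma linear_endo_eq_lincomb_0_1:
  assumes lin: "linear_endo n D" and n: "1 \<le> n"
    and van: "\<forall>i\<in>{2..n}. D (ee n i) = (\<lambda>k. 0)" and x: "x \<in> carR n"
  shows "D x = vadd (smul (x 0) (D hh)) (smul (x 1) (D (ee n 1)))"
proof -
  define G :: "(nat \<Rightarrow> complex) \<Rightarrow> nat \<Rightarrow> complex"
    where "G y = vadd (smul (y 0) (D hh)) (smul (y 1) (D (ee n 1)))" for y
  have "D hh \<in> carR n" "D (ee n 1) \<in> carR n"
    using lin hh_in_carR ee_in_carR by (auto simp: linear_endo_def)
  then have "linear_endo n G"
    unfolding G_def by (rule linear_endo_lincomb_0_1)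
  moreover have "D hh = G hh"
    by (simp add: G_def vadd_def smul_def hh_apply)
  moreover have "\<forall>i\<in>{1..n}. D (ee n i) = G (ee n i)"
    using van by (auto simp: G_def vadd_def smul_def ee_apply)
  ultimately have "D x = G x"
    using linear_endo_eqI[OF lin _ _ _ x] by blast
  then show ?thesis
    unfolding G_def .
qed

lemma is_antiderivation_cong:
  assumes n: "1 \<le> n" and lin: "linear_endo n D" and DG: "\<forall>x\<in>carR n. D x = G x"
    and G: "is_antiderivation n G"
  shows "is_antiderivation n D"
  unfolding is_antiderivation_def
proof (intro conjI ballI lin)
  fix x y assume x: "x \<in> carR n" and y: "y \<in> carR n"
  have "D (brk n x y) = G (brk n x y)"
    using DG brk_in_carR[OF n] by blast
  also have "\<dots> = vsub (brk n (G x) y) (brk n (G y) x)"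
    using G x y by (simp add: is_antiderivation_def)
  also have "\<dots> = vsub (brk n (D x) y) (brk n (D y) x)"
    using DG x y by simp
  finally show "D (brk n x y) = vsub (brk n (D x) y) (brk n (D y) x)" .
qed

theorem antiderivation_iff:
  assumes n: "1 \<le> n" and lin: "linear_endo n D"
  shows "is_antiderivation n D \<longleftrightarrow>
    (\<forall>i\<in>{2..n}. D (ee n i) = (\<lambda>k. 0)) \<and>
    vsub (rmul_h n (D (ee n 1))) (D (ee n 1)) = rmul_e1 n (D hh)"
proof
  assume D: "is_antiderivation n D"
  have "\<forall>i\<in>{2..n}. D (ee n i) = (\<lambda>k. 0)"
    using antiderivation_ee_vanishes[OF D n] by auto
  then show "(\<forall>i\<in>{2..n}. D (ee n i) = (\<lambda>k. 0)) \<and>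
      vsub (rmul_h n (D (ee n 1))) (D (ee n 1)) = rmul_e1 n (D hh)"
    using antiderivation_hh_ee1[OF D n] by (rule conjI)
next
  assume "(\<forall>i\<in>{2..n}. D (ee n i) = (\<lambda>k. 0)) \<and>
      vsub (rmul_h n (D (ee n 1))) (D (ee n 1)) = rmul_e1 n (D hh)"
  then have van: "\<forall>i\<in>{2..n}. D (ee n i) = (\<lambda>k. 0)"
    and cond: "vsub (rmul_h n (D (ee n 1))) (D (ee n 1)) = rmul_e1 n (D hh)" by auto
  have car: "D hh \<in> carR n" "D (ee n 1) \<in> carR n"
    using lin hh_in_carR ee_in_carR by (auto simp: linear_endo_def)
  have "\<forall>x\<in>carR n. D x = vadd (smul (x 0) (D hh)) (smul (x 1) (D (ee n 1)))"
    using linear_endo_eq_lincomb_0_1[OF lin n van] by blast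
  moreover have "is_antiderivation n (\<lambda>x. vadd (smul (x 0) (D hh)) (smul (x 1) (D (ee n 1))))"
    by (rule antiderivation_lincomb_0_1[OF n car cond])
  ultimately show "is_antiderivation n D"
    by (rule is_antiderivation_cong[OF n lin])
qed

section \<open>Biderivations\<close>

lemma brk_right_eq_iff:
  assumes n: "1 \<le> n"
  shows "(\<forall>x\<in>carR n. brk n x u = brk n x v) \<longleftrightarrow> u 0 = v 0 \<and> u 1 = v 1"
proof
  assume eq: "\<forall>x\<in>carR n. brk n x u = brk n x v"
  have "brk n hh u 1 = brk n hh v 1" "brk n (ee n n) u n = brk n (ee n n) v n"
    using eq hh_in_carR ee_in_carR by auto
  then show "u 0 = v 0 \<and> u 1 = v 1"
    using n by (simp add: right_mult_hh right_mult_ee smul_def vadd_def ee_apply)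
qed (simp add: brk_eq n del: One_nat_def)

lemma biderivation_compat_iff:
  assumes n: "1 \<le> n" and lin: "linear_endo n D"
    and dz: "\<forall>x\<in>carR n. d x = brk n x z"
    and van: "\<forall>i\<in>{2..n}. D (ee n i) = (\<lambda>k. 0)"
  shows "(\<forall>x\<in>carR n. \<forall>y\<in>carR n. brk n x (d y) = brk n x (D y)) \<longleftrightarrow>
    D hh 0 = 0 \<and> D hh 1 = - z 1 \<and> D (ee n 1) 0 = 0 \<and> D (ee n 1) 1 = z 0"
proof -
  have "(\<forall>x\<in>carR n. \<forall>y\<in>carR n. brk n x (d y) = brk n x (D y)) \<longleftrightarrow>
      (\<forall>y\<in>carR n. d y 0 = D y 0 \<and> d y 1 = D y 1)"
    using brk_right_eq_iff[OF n] by blast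
  also have "\<dots> \<longleftrightarrow> (\<forall>y\<in>carR n. 0 = y 0 * D hh 0 + y 1 * D (ee n 1) 0
      \<and> y 1 * z 0 - y 0 * z 1 = y 0 * D hh 1 + y 1 * D (ee n 1) 1)"
  proof -
    have "d y 0 = 0" "d y 1 = y 1 * z 0 - y 0 * z 1"
      and "D y 0 = y 0 * D hh 0 + y 1 * D (ee n 1) 0" "D y 1 = y 0 * D hh 1 + y 1 * D (ee n 1) 1"
      if "y \<in> carR n" for y
      using dz that linear_endo_eq_lincomb_0_1[OF lin n van that]
      by (simp_all add: brk_apply_0_1[OF n] vadd_def smul_def del: One_nat_def)
    then show ?thesis by (metis (no_types, lifting))
  qed
  also have "\<dots> \<longleftrightarrow> D hh 0 = 0 \<and> D hh 1 = - z 1 \<and> D (ee n 1) 0 = 0 \<and> D (ee n 1) 1 = z 0"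
  proof
    assume "\<forall>y\<in>carR n. 0 = y 0 * D hh 0 + y 1 * D (ee n 1) 0
      \<and> y 1 * z 0 - y 0 * z 1 = y 0 * D hh 1 + y 1 * D (ee n 1) 1"
    then have "0 = hh 0 * D hh 0 + hh 1 * D (ee n 1) 0"
      "hh 1 * z 0 - hh 0 * z 1 = hh 0 * D hh 1 + hh 1 * D (ee n 1) 1"
      "0 = ee n 1 0 * D hh 0 + ee n 1 1 * D (ee n 1) 0"
      "ee n 1 1 * z 0 - ee n 1 0 * z 1 = ee n 1 0 * D hh 1 + ee n 1 1 * D (ee n 1) 1"
      using hh_in_carR ee_in_carR by blast+
    then show "D hh 0 = 0 \<and> D hh 1 = - z 1 \<and> D (ee n 1) 0 = 0 \<and> D (ee n 1) 1 = z 0"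
      using n by (simp add: hh_apply ee_apply del: One_nat_def)
  qed (auto simp: algebra_simps)
  finally show ?thesis .
qed

lemma rmul_h_minus_eq_rmul_e1_iff:
  assumes "P \<in> carR n" "Q \<in> carR n"
  shows "vsub (rmul_h n Q) Q = rmul_e1 n P \<longleftrightarrow>
    P 0 = 0 \<and> Q 0 = 0 \<and> (\<forall>k\<in>{2..n}. of_nat (k - 1) * Q k = P (k - 1))"
proof -
  have "vsub (rmul_h n Q) Q k = rmul_e1 n P k \<longleftrightarrow>
      (k = 0 \<longrightarrow> Q 0 = 0) \<and> (k = 1 \<longrightarrow> P 0 = 0) \<and>
      (k \<in> {2..n} \<longrightarrow> of_nat (k - 1) * Q k = P (k - 1))" for k
  proof -
    consider "k = 0" | "k = 1" | "2 \<le> k \<and> k \<le> n" | "n < k" by linarith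
    then show ?thesis
      using assms by cases (auto simp: vsub_def rmul_h_def rmul_e1_def carR_def of_nat_diff algebra_simps)
  qed
  then show ?thesis
    by (auto simp: fun_eq_iff)
qed

lemma antiderivation_form_iff:
  assumes n: "2 \<le> n" and PQ: "P \<in> carR n" "Q \<in> carR n"
  shows "(\<exists>\<beta>.
      P = vadd (vadd (smul (- \<alpha>1) (ee n 1)) (\<lambda>k. \<Sum>i=2..n-1. of_nat i * \<beta> (i + 1) * ee n i k))
        (smul (\<beta> (n + 1)) (ee n n)) \<and>
      Q = vadd (vadd (smul \<alpha>2 (ee n 1)) (smul (- \<alpha>1) (ee n 2))) (\<lambda>k. \<Sum>i=3..n. \<beta> i * ee n i k))
    \<longleftrightarrow> P 1 = - \<alpha>1 \<and> Q 1 = \<alpha>2 \<and> vsub (rmul_h n Q) Q = rmul_e1 n P"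
    (is "(\<exists>\<beta>. P = ?P \<beta> \<and> Q = ?Q \<beta>) \<longleftrightarrow> _")
proof -
  have P_apply: "?P \<beta> k = (if k = 1 then - \<alpha>1 else if 2 \<le> k \<and> k \<le> n - 1 then of_nat k * \<beta> (k + 1)
      else if k = n then \<beta> (n + 1) else 0)" for \<beta> k
    using n unfolding vadd_def smul_def sum_ee_apply[OF finite_atLeastAtMost] by (auto simp: ee_apply)
  have Q_apply: "?Q \<beta> k = (if k = 1 then \<alpha>2 else if k = 2 then - \<alpha>1
      else if 3 \<le> k \<and> k \<le> n then \<beta> k else 0)" for \<beta> k
    using n unfolding vadd_def smul_def sum_ee_apply[OF finite_atLeastAtMost] by (auto simp: ee_apply)
  show ?thesis
  proof
    assume "\<exists>\<beta>. P = ?P \<beta> \<and> Q = ?Q \<beta>"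
    then obtain \<beta> where "P = ?P \<beta>" "Q = ?Q \<beta>" by blast
    moreover have "of_nat (k - 1) * ?Q \<beta> k = ?P \<beta> (k - 1)" if "k \<in> {2..n}" for k
      using that n unfolding P_apply Q_apply by auto
    ultimately show "P 1 = - \<alpha>1 \<and> Q 1 = \<alpha>2 \<and> vsub (rmul_h n Q) Q = rmul_e1 n P"
      using n PQ unfolding rmul_h_minus_eq_rmul_e1_iff[OF PQ] by (simp add: P_apply Q_apply del: One_nat_def)
  next
    assume "P 1 = - \<alpha>1 \<and> Q 1 = \<alpha>2 \<and> vsub (rmul_h n Q) Q = rmul_e1 n P"
    then have low: "P 0 = 0" "P 1 = - \<alpha>1" "Q 0 = 0" "Q 1 = \<alpha>2"
      and shift: "\<forall>k\<in>{2..n}. of_nat (k - 1) * Q k = P (k - 1)"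
      using rmul_h_minus_eq_rmul_e1_iff[OF PQ] by auto
    define \<beta> where "\<beta> j = (if j = n + 1 then P n else Q j)" for j
    have "P = ?P \<beta>"
    proof
      fix k
      consider "k = 0" | "k = 1" | "2 \<le> k \<and> k \<le> n - 1" | "k = n" | "n < k" by linarith
      then show "P k = ?P \<beta> k"
        unfolding P_apply using shift[rule_format, of "k + 1"] low PQ n
        by cases (auto simp: \<beta>_def carR_def)
    qed
    moreover have "Q = ?Q \<beta>"
    proof
      fix k
      consider "k = 0" | "k = 1" | "k = 2" | "3 \<le> k \<and> k \<le> n" | "n < k" by linarith
      then show "Q k = ?Q \<beta> k"
        unfolding Q_apply using shift[rule_format, of 2] low PQ n
        by cases (auto simp: \<beta>_def carR_def)
    qed
    ultimately show "\<exists>\<beta>. P = ?P \<beta> \<and> Q = ?Q \<beta>" by blast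
  qed
qed

theorem biderivation_iff_right_mult:
  assumes n: "2 \<le> n" and lin: "linear_endo n d" "linear_endo n D"
  shows "is_biderivation n d D \<longleftrightarrow>
    (\<exists>z. (\<forall>x\<in>carR n. d x = brk n x z) \<and> (\<forall>i\<in>{2..n}. D (ee n i) = (\<lambda>k. 0)) \<and>
      D hh 1 = - z 1 \<and> D (ee n 1) 1 = z 0 \<and>
      vsub (rmul_h n (D (ee n 1))) (D (ee n 1)) = rmul_e1 n (D hh))"
proof -
  have n1: "1 \<le> n" using n by simp
  have "D hh \<in> carR n" "D (ee n 1) \<in> carR n"
    using lin(2) hh_in_carR ee_in_carR by (auto simp: linear_endo_def)
  note low = rmul_h_minus_eq_rmul_e1_iff[OF this]
  show ?thesis
    unfolding is_biderivation_def derivation_iff_right_mult[OF n lin(1)] antiderivation_iff[OF n1 lin(2)]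
    using biderivation_compat_iff[OF n1 lin(2)] low by blast
qed

theorem mainTheorem8:
  fixes n :: nat and d D :: "(nat \<Rightarrow> complex) \<Rightarrow> (nat \<Rightarrow> complex)"
  assumes "n \<ge> 2" and "linear_endo n d" and "linear_endo n D"
  shows "is_biderivation n d D \<longleftrightarrow>
    (\<exists>\<alpha>1 \<alpha>2 :: complex. \<exists>\<beta> :: nat \<Rightarrow> complex.
       d hh = smul (- \<alpha>1) (ee n 1)
     \<and> (\<forall>i\<in>{1..n}. d (ee n i) = vadd (smul (of_nat i * \<alpha>2) (ee n i)) (smul \<alpha>1 (ee n (i + 1))))
     \<and> D hh = vadd (vadd (smul (- \<alpha>1) (ee n 1))
                      (\<lambda>k. \<Sum>i=2..n-1. of_nat i * \<beta> (i + 1) * ee n i k))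
                (smul (\<beta> (n + 1)) (ee n n))
     \<and> D (ee n 1) = vadd (vadd (smul \<alpha>2 (ee n 1)) (smul (- \<alpha>1) (ee n 2)))
                      (\<lambda>k. \<Sum>i=3..n. \<beta> i * ee n i k)
     \<and> (\<forall>i\<in>{2..n}. D (ee n i) = (\<lambda>k. 0)))"
proof -
  have n1: "1 \<le> n" using assms(1) by simp
  have car: "D hh \<in> carR n" "D (ee n 1) \<in> carR n"
    using assms(3) hh_in_carR ee_in_carR by (auto simp: linear_endo_def)
  note d_form = eq_right_mult_iff_basis[OF n1 assms(2)]
  note D_form = antiderivation_form_iff[OF assms(1) car]
  show ?thesis
    unfolding biderivation_iff_right_mult[OF assms]
    apply (intro iffI; elim exE conjE)
    subgoal for z
      using d_form[of z] D_form[of "z 1" "z 0"] by blast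
    subgoal for \<alpha>1 \<alpha>2 \<beta>
      using d_form[of "\<lambda>k. if k = 0 then \<alpha>2 else \<alpha>1"] D_form[of \<alpha>1 \<alpha>2] by auto
    done
qed

end
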